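(* For every formula $\varphi$ of $\mathcal L^{\bigcirc}_\square$ the following are equivalent: (i) $\varphi$ is derivable in $\mathbf{K4H}$; (ii) $\varphi$ is valid on every finite invertible dynamic $\mathbf{K4}$ frame; (iii) $\varphi$ is valid, with respect to the $d$-semantics, on every invertible dynamic topological system $\langle X,\tau,f\rangle$ whose underlying space is $T_D$.
   Context: Language $\mathcal L^{\bigcirc}_\square$: $\varphi::= p\mid \varphi\wedge\varphi\mid\neg\varphi\mid\square\varphi\mid\bigcirc\varphi$, $p$ ranging over a fixed non-empty set $\mathsf{PV}$. Axioms and rules: Taut; K: $\square(\varphi\to\psi)\to(\square\varphi\to\square\psi)$; 4: $\square\varphi\to\square\square\varphi$; ${\rm Next}_\neg$: $\neg\bigcirc\varphi\leftrightarrow\bigcirc\neg\varphi$; ${\rm Next}_\wedge$: $\bigcirc(\varphi\wedge\psi)\leftrightarrow\bigcirc\varphi\wedge\bigcirc\psi$; H: $\square\bigcirc\varphi\leftrightarrow\bigcirc\square\varphi$; rules modus ponens, ${\rm Nec}_\square$, ${\rm Nec}_\bigcirc$. $\mathbf{K4H}$ is axiomatised by Taut, K, 4, ${\rm Next}_\neg$, ${\rm Next}_\wedge$, H, closed under these rules. An invertible dynamic $\mathbf{K4}$ frame is $\langle W,\sqsubset,f\rangle$ with $W$ non-empty, $\sqsubset$ transitive, and $f\colon W\to W$ a bijection such that $w\sqsubset v$ iff $f(w)\sqsubset f(v)$. Kripke truth: $w\models\square\varphi$ iff $v\models\varphi$ for all $v$ with $w\sqsubset v$; $w\models\bigcirc\varphi$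 iff $f(w)\models\varphi$. A $T_D$ space is one in which every singleton is the intersection of an open and a closed set. An invertible DTS is $\langle X,\tau,f\rangle$ with $f$ a homeomorphism of $X$. $d$-semantics: with $d(A)$ the set of $x$ in the closure of $A\setminus\{x\}$, $\|p\|=\nu(p)$, Boolean clauses set-theoretic, $\|\square\varphi\|=X\setminus d(\|\neg\varphi\|)$, $\|\bigcirc\varphi\|=f^{-1}(\|\varphi\|)$. Validity means truth everywhere under every valuation. *)

theory Defs
  imports "HOL-Analysis.Analysis"
begin

datatype 'p fm =
    Atom 'p
  | And "'p fm" "'p fm"
  | Neg "'p fm"
  | Box "'p fm"
  | Nxt "'p fm"

definition Imp :: "'p fm \<Rightarrow> 'p fm \<Rightarrow> 'p fm" where
  "Imp a b = Neg (And a (Neg b))"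

definition Iff :: "'p fm \<Rightarrow> 'p fm \<Rightarrow> 'p fm" where
  "Iff a b = And (Imp a b) (Imp b a)"

fun peval :: "('p fm \<Rightarrow> bool) \<Rightarrow> 'p fm \<Rightarrow> bool" where
  "peval v (Atom p) = v (Atom p)"
| "peval v (And a b) = (peval v a \<and> peval v b)"
| "peval v (Neg a) = (\<not> peval v a)"
| "peval v (Box a) = v (Box a)"
| "peval v (Nxt a) = v (Nxt a)"

definition taut :: "'p fm \<Rightarrow> bool" where
  "taut \<phi> = (\<forall>v. peval v \<phi>)"

inductive K4H :: "'p fm \<Rightarrow> bool" where
  Taut: "taut \<phi> \<Longrightarrow> K4H \<phi>"
| K: "K4H (Imp (Box (Imp \<phi> \<psi>)) (Imp (Box \<phi>) (Box \<psi>)))"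
| Four: "K4H (Imp (Box \<phi>) (Box (Box \<phi>)))"
| Next_neg: "K4H (Iff (Neg (Nxt \<phi>)) (Nxt (Neg \<phi>)))"
| Next_and: "K4H (Iff (Nxt (And \<phi> \<psi>)) (And (Nxt \<phi>) (Nxt \<psi>)))"
| H: "K4H (Iff (Box (Nxt \<phi>)) (Nxt (Box \<phi>)))"
| MP: "K4H (Imp \<phi> \<psi>) \<Longrightarrow> K4H \<phi> \<Longrightarrow> K4H \<psi>"
| Nec_box: "K4H \<phi> \<Longrightarrow> K4H (Box \<phi>)"
| Nec_next: "K4H \<phi> \<Longrightarrow> K4H (Nxt \<phi>)"

definition inv_dyn_K4_frame :: "'a set \<Rightarrow> ('a \<Rightarrow> 'a \<Rightarrow> bool) \<Rightarrow> ('a \<Rightarrow> 'a) \<Rightarrow> bool" where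
  "inv_dyn_K4_frame W R f \<longleftrightarrow>
     W \<noteq> {} \<and>
     (\<forall>w v. R w v \<longrightarrow> w \<in> W \<and> v \<in> W) \<and>
     (\<forall>u\<in>W. \<forall>v\<in>W. \<forall>w\<in>W. R u v \<longrightarrow> R v w \<longrightarrow> R u w) \<and>
     bij_betw f W W \<and>
     (\<forall>w\<in>W. \<forall>v\<in>W. R w v \<longleftrightarrow> R (f w) (f v))"

fun ksat :: "'a set \<Rightarrow> ('a \<Rightarrow> 'a \<Rightarrow> bool) \<Rightarrow> ('a \<Rightarrow> 'a) \<Rightarrow> ('p \<Rightarrow> 'a set) \<Rightarrow> 'a \<Rightarrow> 'p fm \<Rightarrow> bool" where
  "ksat W R f V w (Atom p) = (w \<in> V p)"
| "ksat W R f V w (And a b) = (ksat W R f V w a \<and> ksat W R f V w b)"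
| "ksat W R f V w (Neg a) = (\<not> ksat W R f V w a)"
| "ksat W R f V w (Box a) = (\<forall>v\<in>W. R w v \<longrightarrow> ksat W R f V v a)"
| "ksat W R f V w (Nxt a) = ksat W R f V (f w) a"

definition kvalid :: "'a set \<Rightarrow> ('a \<Rightarrow> 'a \<Rightarrow> bool) \<Rightarrow> ('a \<Rightarrow> 'a) \<Rightarrow> 'p fm \<Rightarrow> bool" where
  "kvalid W R f \<phi> \<longleftrightarrow> (\<forall>V. \<forall>w\<in>W. ksat W R f V w \<phi>)"

definition T_D_space :: "'a topology \<Rightarrow> bool" where
  "T_D_space T \<longleftrightarrow>
     (\<forall>x\<in>topspace T. \<exists>U C. openin T U \<and> closedin T C \<and> U \<inter> C = {x})"

definition inv_DTS :: "'a topology \<Rightarrow> ('a \<Rightarrow> 'a) \<Rightarrow> bool" where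
  "inv_DTS T f \<longleftrightarrow> homeomorphic_map T T f"

fun dval :: "'a topology \<Rightarrow> ('a \<Rightarrow> 'a) \<Rightarrow> ('p \<Rightarrow> 'a set) \<Rightarrow> 'p fm \<Rightarrow> 'a set" where
  "dval T f V (Atom p) = V p \<inter> topspace T"
| "dval T f V (And a b) = dval T f V a \<inter> dval T f V b"
| "dval T f V (Neg a) = topspace T - dval T f V a"
| "dval T f V (Box a) = topspace T - (T derived_set_of (topspace T - dval T f V a))"
| "dval T f V (Nxt a) = {x \<in> topspace T. f x \<in> dval T f V a}"

definition dvalid :: "'a topology \<Rightarrow> ('a \<Rightarrow> 'a) \<Rightarrow> 'p fm \<Rightarrow> bool" where
  "dvalid T f \<phi> \<longleftrightarrow> (\<forall>V. dval T f V \<phi> = topspace T)"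

end

theory Submission
  imports Defs
begin

text \<open>
  Soundness is by induction on derivations; for the d-semantics, axiom 4 is where the T_D
  property enters, and H holds because \<open>f\<close> is a homeomorphism.

  Completeness for finite frames: the \<open>Nxt\<close> axioms and H push every \<open>Nxt\<close> down to the atoms,
  so it suffices to refute formulas whose \<open>Nxt\<close>-subformulas have the shape \<open>Nxt\<^sup>k p\<close>.
  Treating these as atoms, the consistent sets of literals over the subformulas form a finite
  transitive canonical model. Taking \<open>N\<close> copies of it, with \<open>f\<close> cycling through the copies
  and \<open>p\<close> true in the \<open>k\<close>-th copy of \<open>G\<close> iff \<open>Nxt\<^sup>k p \<in> G\<close>, makes \<open>Nxt\<^sup>k p\<close> true
  at the \<open>0\<close>-th copy exactly when it belongs to \<open>G\<close>.

  From finite frames to T_D spaces: unravelling each cluster along \<open>\<nat>\<close> gives an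
  irreflexive transitive frame mapping onto the original one by a bounded morphism. The
  Alexandrov topology of such a frame is T_D, its derived sets are the sets of
  \<open>R\<close>-predecessors, so its d-semantics is the Kripke semantics. All models involved are
  countable and can therefore be copied into the infinite type of the theorem.
\<close>

lemma peval_Imp [simp]: "peval v (Imp a b) = (peval v a \<longrightarrow> peval v b)"
  by (simp add: Imp_def)

lemma peval_Iff [simp]: "peval v (Iff a b) = (peval v a \<longleftrightarrow> peval v b)"
  by (auto simp add: Iff_def)

lemma K4H_tautI: "(\<And>v. peval v c) \<Longrightarrow> K4H c"
  by (rule K4H.Taut) (simp add: taut_def)

lemma K4H_prop1: "K4H a \<Longrightarrow> (\<And>v. peval v a \<Longrightarrow> peval v c) \<Longrightarrow> K4H c"
  by (rule K4H.MP[of a], rule K4H_tautI) auto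

lemma K4H_prop2:
  "K4H a \<Longrightarrow> K4H b \<Longrightarrow> (\<And>v. peval v a \<Longrightarrow> peval v b \<Longrightarrow> peval v c) \<Longrightarrow> K4H c"
  by (rule K4H.MP[of b], rule K4H.MP[of a], rule K4H_tautI) auto

lemma K4H_prop3:
  "K4H a \<Longrightarrow> K4H b \<Longrightarrow> K4H d \<Longrightarrow>
    (\<And>v. peval v a \<Longrightarrow> peval v b \<Longrightarrow> peval v d \<Longrightarrow> peval v c) \<Longrightarrow> K4H c"
  by (rule K4H.MP[of d], rule K4H.MP[of b], rule K4H.MP[of a], rule K4H_tautI) auto

lemma K4H_prop4:
  "K4H a \<Longrightarrow> K4H b \<Longrightarrow> K4H d \<Longrightarrow> K4H e \<Longrightarrow>
    (\<And>v. peval v a \<Longrightarrow> peval v b \<Longrightarrow> peval v d \<Longrightarrow> peval v e \<Longrightarrow> peval v c) \<Longrightarrow> K4H c"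
  by (rule K4H.MP[of e], rule K4H.MP[of d], rule K4H.MP[of b], rule K4H.MP[of a],
      rule K4H_tautI) auto

lemma frame_rel_in: "inv_dyn_K4_frame W R f \<Longrightarrow> R u v \<Longrightarrow> u \<in> W \<and> v \<in> W"
  unfolding inv_dyn_K4_frame_def by blast

lemma frame_trans: "inv_dyn_K4_frame W R f \<Longrightarrow> R u v \<Longrightarrow> R v w \<Longrightarrow> R u w"
  unfolding inv_dyn_K4_frame_def by (elim conjE) (metis (no_types))

lemma frame_nonempty: "inv_dyn_K4_frame W R f \<Longrightarrow> W \<noteq> {}"
  unfolding inv_dyn_K4_frame_def by blast

lemma frame_bij: "inv_dyn_K4_frame W R f \<Longrightarrow> bij_betw f W W"
  unfolding inv_dyn_K4_frame_def by blast

lemma frame_map_in: "inv_dyn_K4_frame W R f \<Longrightarrow> u \<in> W \<Longrightarrow> f u \<in> W"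
  using frame_bij bij_betwE by blast

lemma frame_rel_map_iff:
  "inv_dyn_K4_frame W R f \<Longrightarrow> u \<in> W \<Longrightarrow> v \<in> W \<Longrightarrow> R (f u) (f v) \<longleftrightarrow> R u v"
  unfolding inv_dyn_K4_frame_def by blast

lemma ksat_peval: "ksat W R f V w \<phi> = peval (ksat W R f V w) \<phi>"
  by (induction \<phi>) auto

lemma ksat_Imp [simp]: "ksat W R f V w (Imp a b) = (ksat W R f V w a \<longrightarrow> ksat W R f V w b)"
  by (simp add: Imp_def)

lemma ksat_Iff [simp]: "ksat W R f V w (Iff a b) = (ksat W R f V w a \<longleftrightarrow> ksat W R f V w b)"
  by (auto simp add: Iff_def)

lemma ksat_H:
  assumes "inv_dyn_K4_frame W R f" "w \<in> W"
  shows "ksat W R f V w (Iff (Box (Nxt \<phi>)) (Nxt (Box \<phi>)))"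
proof -
  have "f ` W = W"
    using frame_bij[OF assms(1)] by (simp add: bij_betw_def)
  then have "(\<forall>u\<in>W. R (f w) u \<longrightarrow> ksat W R f V u \<phi>) \<longleftrightarrow>
             (\<forall>u\<in>f ` W. R (f w) u \<longrightarrow> ksat W R f V u \<phi>)"
    by simp
  also have "\<dots> \<longleftrightarrow> (\<forall>v\<in>W. R (f w) (f v) \<longrightarrow> ksat W R f V (f v) \<phi>)"
    by simp
  finally show ?thesis
    using frame_rel_map_iff[OF assms(1) assms(2)] by simp
qed

theorem K4H_sound_kripke:
  assumes "inv_dyn_K4_frame W R f" "K4H \<phi>"
  shows "kvalid W R f \<phi>"
  unfolding kvalid_def
proof (intro allI)
  fix V
  show "\<forall>w\<in>W. ksat W R f V w \<phi>"
    using assms(2)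
  proof (induction rule: K4H.induct)
    case (Taut \<phi>)
    then show ?case by (subst ksat_peval) (simp add: taut_def)
  next
    case (Four \<phi>)
    then show ?case using frame_trans[OF assms(1)] frame_rel_in[OF assms(1)] by simp
  next
    case (H \<phi>)
    then show ?case using ksat_H[OF assms(1)] by blast
  next
    case (Nec_next \<phi>)
    then show ?case using frame_map_in[OF assms(1)] by simp
  qed simp_all
qed

declare dval.simps(4) [simp del]

lemma dval_subset_topspace: "dval T f V \<phi> \<subseteq> topspace T"
  by (induction \<phi>) (auto simp: dval.simps(4))

lemma dval_peval: "x \<in> topspace T \<Longrightarrow> x \<in> dval T f V \<phi> \<longleftrightarrow> peval (\<lambda>\<psi>. x \<in> dval T f V \<psi>) \<phi>"
  by (induction \<phi>) (auto simp: dval.simps(4))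

lemma dval_Imp:
  "x \<in> dval T f V (Imp a b) \<longleftrightarrow> x \<in> topspace T \<and> (x \<in> dval T f V a \<longrightarrow> x \<in> dval T f V b)"
  using dval_subset_topspace[of T f V a] by (auto simp add: Imp_def)

lemma dval_Iff:
  "x \<in> dval T f V (Iff a b) \<longleftrightarrow> x \<in> topspace T \<and> (x \<in> dval T f V a \<longleftrightarrow> x \<in> dval T f V b)"
  unfolding Iff_def dval.simps(2) Int_iff dval_Imp by blast

lemma dval_Box:
  "x \<in> dval T f V (Box a) \<longleftrightarrow>
     x \<in> topspace T \<and> (\<exists>U. openin T U \<and> x \<in> U \<and> (\<forall>y\<in>U. y \<noteq> x \<longrightarrow> y \<in> dval T f V a))"
  unfolding dval.simps(4) Diff_iff in_derived_set_of using openin_subset by blast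

lemma dval_BoxI:
  "openin T U \<Longrightarrow> x \<in> U \<Longrightarrow> (\<And>y. y \<in> U \<Longrightarrow> y \<noteq> x \<Longrightarrow> y \<in> dval T f V a) \<Longrightarrow>
    x \<in> dval T f V (Box a)"
  unfolding dval_Box using openin_subset by blast

lemma dval_K:
  assumes "x \<in> dval T f V (Box (Imp a b))" "x \<in> dval T f V (Box a)"
  shows "x \<in> dval T f V (Box b)"
proof -
  obtain U1 where U1: "openin T U1" "x \<in> U1" "\<forall>y\<in>U1. y \<noteq> x \<longrightarrow> y \<in> dval T f V (Imp a b)"
    using assms(1) dval_Box by metis
  obtain U2 where U2: "openin T U2" "x \<in> U2" "\<forall>y\<in>U2. y \<noteq> x \<longrightarrow> y \<in> dval T f V a"
    using assms(2) dval_Box by metis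
  show ?thesis
  proof (rule dval_BoxI[of T "U1 \<inter> U2"])
    show "openin T (U1 \<inter> U2)" "x \<in> U1 \<inter> U2"
      using U1(1,2) U2(1,2) by auto
  next
    fix y assume "y \<in> U1 \<inter> U2" "y \<noteq> x"
    then show "y \<in> dval T f V b"
      using U1(3) U2(3) by (simp add: dval_Imp)
  qed
qed

text \<open>For a T_D witness \<open>U0 \<inter> C = {x}\<close>, each \<open>y \<in> U \<inter> U0 - {x}\<close> has the
  neighbourhood \<open>U - C\<close>, which avoids \<open>x\<close>.\<close>

lemma dval_Four:
  assumes "T_D_space T" "x \<in> dval T f V (Box a)"
  shows "x \<in> dval T f V (Box (Box a))"
proof -
  obtain U where U: "openin T U" "x \<in> U" "\<forall>y\<in>U. y \<noteq> x \<longrightarrow> y \<in> dval T f V a"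
    using assms(2) dval_Box by metis
  have "x \<in> topspace T"
    using U(1,2) openin_subset by blast
  then obtain U0 C where UC: "openin T U0" "closedin T C" "U0 \<inter> C = {x}"
    using assms(1) unfolding T_D_space_def by blast
  show ?thesis
  proof (rule dval_BoxI[of T "U \<inter> U0"])
    show "openin T (U \<inter> U0)" "x \<in> U \<inter> U0"
      using U(1,2) UC(1,3) by auto
  next
    fix y assume y: "y \<in> U \<inter> U0" "y \<noteq> x"
    show "y \<in> dval T f V (Box a)"
    proof (rule dval_BoxI[of T "U - C"])
      show "openin T (U - C)"
        using U(1) UC(2) by (rule openin_diff)
      show "y \<in> U - C"
        using y UC(3) by blast
      show "z \<in> dval T f V a" if "z \<in> U - C" "z \<noteq> y" for z
      proof -
        have "z \<noteq> x"
          using that(1) UC(3) by blast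
        then show ?thesis
          using that(1) U(3) by blast
      qed
    qed
  qed
qed

lemma dval_H:
  assumes "homeomorphic_map T T f" "x \<in> topspace T"
  shows "x \<in> dval T f V (Box (Nxt a)) \<longleftrightarrow> x \<in> dval T f V (Nxt (Box a))"
proof
  assume "x \<in> dval T f V (Box (Nxt a))"
  then obtain U where U: "openin T U" "x \<in> U" "\<forall>y\<in>U. y \<noteq> x \<longrightarrow> y \<in> dval T f V (Nxt a)"
    using dval_Box by metis
  have "f x \<in> dval T f V (Box a)"
  proof (rule dval_BoxI[of T "f ` U"])
    show "openin T (f ` U)"
      using homeomorphic_imp_open_map[OF assms(1)] U(1) by (simp add: open_map_def)
    show "f x \<in> f ` U"
      using U(2) by (rule imageI)
    show "z \<in> dval T f V a" if z: "z \<in> f ` U" "z \<noteq> f x" for z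
    proof -
      obtain y where "y \<in> U" "z = f y"
        using z(1) by blast
      moreover have "y \<noteq> x"
        using calculation z(2) by blast
      ultimately show ?thesis
        using U(3) unfolding dval.simps(5) by blast
    qed
  qed
  then show "x \<in> dval T f V (Nxt (Box a))"
    using assms(2) unfolding dval.simps(5) by blast
next
  assume "x \<in> dval T f V (Nxt (Box a))"
  then have "f x \<in> dval T f V (Box a)"
    by simp
  then obtain U where U: "openin T U" "f x \<in> U" "\<forall>y\<in>U. y \<noteq> f x \<longrightarrow> y \<in> dval T f V a"
    using dval_Box by metis
  show "x \<in> dval T f V (Box (Nxt a))"
  proof (rule dval_BoxI[of T "{y \<in> topspace T. f y \<in> U}"])
    show "openin T {y \<in> topspace T. f y \<in> U}"
      using homeomorphic_imp_continuous_map[OF assms(1)] U(1) by (rule openin_continuous_map_preimage)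
    show "y \<in> dval T f V (Nxt a)" if "y \<in> {y \<in> topspace T. f y \<in> U}" "y \<noteq> x" for y
      using that U(3) homeomorphic_imp_injective_map[OF assms(1)] assms(2)
      by (auto simp: inj_on_def)
  qed (use assms(2) U(2) in simp)
qed

lemma dval_eq_topspaceI:
  "(\<And>x. x \<in> topspace T \<Longrightarrow> x \<in> dval T f V \<phi>) \<Longrightarrow> dval T f V \<phi> = topspace T"
  by (rule subset_antisym[OF dval_subset_topspace subsetI])

theorem K4H_sound_d:
  assumes "inv_DTS T f" "T_D_space T" "K4H \<phi>"
  shows "dvalid T f \<phi>"
  unfolding dvalid_def
proof
  fix V
  have f_in: "f x \<in> topspace T" if "x \<in> topspace T" for x
    using assms(1) that homeomorphic_imp_surjective_map unfolding inv_DTS_def by blast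
  show "dval T f V \<phi> = topspace T"
    using assms(3)
  proof (induction rule: K4H.induct)
    case (Taut \<phi>)
    then show ?case
      using dval_peval[of _ T f V \<phi>] by (intro dval_eq_topspaceI) (simp add: taut_def)
  next
    case (K \<phi> \<psi>)
    show ?case
      by (intro dval_eq_topspaceI) (auto simp: dval_Imp intro: dval_K)
  next
    case (Four \<phi>)
    show ?case
      by (intro dval_eq_topspaceI) (auto simp: dval_Imp intro: dval_Four[OF assms(2)])
  next
    case (H \<phi>)
    show ?case
      using assms(1) unfolding inv_DTS_def by (intro dval_eq_topspaceI) (simp add: dval_Iff dval_H)
  next
    case (MP \<phi> \<psi>)
    then show ?case
      by (intro dval_eq_topspaceI) (metis dval_Imp)
  next
    case (Nec_box \<phi>)
    then show ?case
      by (intro dval_eq_topspaceI dval_BoxI[OF openin_topspace]) simp_all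
  next
    case (Next_neg \<phi>)
    show ?case
      using f_in by (intro dval_eq_topspaceI) (simp add: dval_Iff)
  next
    case (Next_and \<phi> \<psi>)
    show ?case
      using f_in by (intro dval_eq_topspaceI) (auto simp add: dval_Iff)
  next
    case (Nec_next \<phi>)
    then show ?case
      using f_in by (intro dval_eq_topspaceI) simp
  qed
qed

section \<open>Pushing \<open>Nxt\<close> down to the atoms\<close>

lemma K4H_Iff_refl: "K4H (Iff a a)"
  by (rule K4H_tautI) simp

lemma K4H_IffD1: "K4H (Iff a b) \<Longrightarrow> K4H (Imp a b)"
  by (erule K4H_prop1) simp

lemma K4H_IffD2: "K4H (Iff a b) \<Longrightarrow> K4H (Imp b a)"
  by (erule K4H_prop1) simp

lemma K4H_Box_mono: "K4H (Imp a b) \<Longrightarrow> K4H (Imp (Box a) (Box b))"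
  by (rule K4H.MP[OF K4H.K], rule K4H.Nec_box)

lemma K4H_Box_And: "K4H (Imp (And (Box a) (Box b)) (Box (And a b)))"
proof -
  have "K4H (Imp (Box a) (Box (Imp b (And a b))))"
    by (rule K4H_Box_mono, rule K4H_tautI) simp
  then show ?thesis
    by (rule K4H_prop2[OF _ K4H.K[of b "And a b"]]) auto
qed

lemma K4H_Box_cong: "K4H (Iff a b) \<Longrightarrow> K4H (Iff (Box a) (Box b))"
  by (rule K4H_prop2[OF K4H_Box_mono[OF K4H_IffD1] K4H_Box_mono[OF K4H_IffD2]]) auto

lemma K4H_Nxt_mono:
  assumes "K4H (Imp a b)"
  shows "K4H (Imp (Nxt a) (Nxt b))"
proof -
  have "K4H (Nxt (Neg (And a (Neg b))))"
    using K4H.Nec_next[OF assms] by (simp add: Imp_def)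
  then show ?thesis
    by (rule K4H_prop4[OF _ K4H.Next_neg[of "And a (Neg b)"] K4H.Next_and[of a "Neg b"]
          K4H.Next_neg[of b]]) auto
qed

lemma K4H_Nxt_cong: "K4H (Iff a b) \<Longrightarrow> K4H (Iff (Nxt a) (Nxt b))"
  by (rule K4H_prop2[OF K4H_Nxt_mono[OF K4H_IffD1] K4H_Nxt_mono[OF K4H_IffD2]]) auto

fun Nxt_pow :: "nat \<Rightarrow> 'p fm \<Rightarrow> 'p fm" where
  "Nxt_pow 0 a = a"
| "Nxt_pow (Suc k) a = Nxt (Nxt_pow k a)"

lemma Nxt_pow_Nxt: "Nxt_pow k (Nxt a) = Nxt_pow (Suc k) a"
  by (induction k) auto

lemma K4H_Nxt_pow_And: "K4H (Iff (Nxt_pow k (And a b)) (And (Nxt_pow k a) (Nxt_pow k b)))"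
proof (induction k)
  case 0
  then show ?case by (simp add: K4H_Iff_refl)
next
  case (Suc k)
  then show ?case
    by (simp, rule K4H_prop2[OF K4H_Nxt_cong K4H.Next_and]) auto
qed

lemma K4H_Nxt_pow_Neg: "K4H (Iff (Nxt_pow k (Neg a)) (Neg (Nxt_pow k a)))"
proof (induction k)
  case 0
  then show ?case by (simp add: K4H_Iff_refl)
next
  case (Suc k)
  then show ?case
    by (simp, rule K4H_prop2[OF K4H_Nxt_cong K4H.Next_neg[of "Nxt_pow k a"]]) auto
qed

lemma K4H_Nxt_pow_Box: "K4H (Iff (Nxt_pow k (Box a)) (Box (Nxt_pow k a)))"
proof (induction k)
  case 0
  then show ?case by (simp add: K4H_Iff_refl)
next
  case (Suc k)
  then show ?case
    by (simp, rule K4H_prop2[OF K4H_Nxt_cong K4H.H]) auto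
qed

fun nxt_nf :: "'p fm \<Rightarrow> nat \<Rightarrow> 'p fm" where
  "nxt_nf (Atom p) k = Nxt_pow k (Atom p)"
| "nxt_nf (And a b) k = And (nxt_nf a k) (nxt_nf b k)"
| "nxt_nf (Neg a) k = Neg (nxt_nf a k)"
| "nxt_nf (Box a) k = Box (nxt_nf a k)"
| "nxt_nf (Nxt a) k = nxt_nf a (Suc k)"

lemma K4H_Nxt_pow_nxt_nf: "K4H (Iff (Nxt_pow k \<phi>) (nxt_nf \<phi> k))"
proof (induction \<phi> arbitrary: k)
  case (Atom p)
  then show ?case by (simp add: K4H_Iff_refl)
next
  case (And a b)
  show ?case
    by (simp, rule K4H_prop3[OF K4H_Nxt_pow_And And.IH(1) And.IH(2)]) auto
next
  case (Neg a)
  show ?case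
    by (simp, rule K4H_prop2[OF K4H_Nxt_pow_Neg Neg.IH]) auto
next
  case (Box a)
  show ?case
    by (simp, rule K4H_prop2[OF K4H_Nxt_pow_Box K4H_Box_cong[OF Box.IH]]) auto
next
  case (Nxt a)
  show ?case
    using Nxt.IH[of "Suc k"] by (simp add: Nxt_pow_Nxt)
qed

fun nxt_normal :: "'p fm \<Rightarrow> bool" where
  "nxt_normal (Atom p) = True"
| "nxt_normal (And a b) = (nxt_normal a \<and> nxt_normal b)"
| "nxt_normal (Neg a) = nxt_normal a"
| "nxt_normal (Box a) = nxt_normal a"
| "nxt_normal (Nxt a) = (\<exists>k p. a = Nxt_pow k (Atom p))"

lemma nxt_normal_nxt_nf: "nxt_normal (nxt_nf \<phi> k)"
proof (induction \<phi> arbitrary: k)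
  case (Atom p)
  then show ?case by (cases k) auto
qed auto

definition Verum :: "'p fm" where
  "Verum = Imp (Atom undefined) (Atom undefined)"

lemma peval_Verum [simp]: "peval v Verum"
  by (simp add: Verum_def)

fun Conj :: "'p fm list \<Rightarrow> 'p fm" where
  "Conj [] = Verum"
| "Conj (a # L) = And a (Conj L)"

definition literal :: "'p fm set \<Rightarrow> 'p fm \<Rightarrow> 'p fm" where
  "literal G x = (if x \<in> G then x else Neg x)"

definition characteristic :: "'p fm list \<Rightarrow> 'p fm set \<Rightarrow> 'p fm" where
  "characteristic L G = Conj (map (literal G) L)"

definition consistent :: "'p fm \<Rightarrow> bool" where
  "consistent c \<longleftrightarrow> \<not> K4H (Neg c)"

lemma K4H_Conj_imp_mem: "x \<in> set L \<Longrightarrow> K4H (Imp (Conj L) x)"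
proof (induction L)
  case (Cons a L)
  show ?case
  proof (cases "x = a")
    case True
    then show ?thesis by (intro K4H_tautI) simp
  next
    case False
    then have "K4H (Imp (Conj L) x)"
      using Cons by simp
    then show ?thesis by (rule K4H_prop1) simp
  qed
qed simp

lemma K4H_imp_Conj: "(\<And>x. x \<in> set L \<Longrightarrow> K4H (Imp c x)) \<Longrightarrow> K4H (Imp c (Conj L))"
proof (induction L)
  case Nil
  then show ?case by (intro K4H_tautI) simp
next
  case (Cons a L)
  have "K4H (Imp c a)" "K4H (Imp c (Conj L))"
    using Cons by auto
  then show ?case
    by (simp, rule K4H_prop2) auto
qed

lemma characteristic_imp_mem: "x \<in> set L \<Longrightarrow> x \<in> G \<Longrightarrow> K4H (Imp (characteristic L G) x)"
  using K4H_Conj_imp_mem[of "literal G x" "map (literal G) L"]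
  by (simp add: characteristic_def literal_def)

lemma characteristic_imp_not_mem:
  "x \<in> set L \<Longrightarrow> x \<notin> G \<Longrightarrow> K4H (Imp (characteristic L G) (Neg x))"
  using K4H_Conj_imp_mem[of "literal G x" "map (literal G) L"]
  by (simp add: characteristic_def literal_def)

lemma consistent_mono:
  assumes "consistent a" "\<And>v. peval v a \<Longrightarrow> peval v b"
  shows "consistent b"
proof -
  have "K4H (Neg b) \<Longrightarrow> K4H (Neg a)"
    by (erule K4H_prop1) (use assms(2) in auto)
  then show ?thesis
    using assms(1) unfolding consistent_def by blast
qed

lemma consistentE2:
  assumes "consistent c" "K4H (Imp c x)" "K4H (Imp c y)"
    and "\<And>v. peval v x \<Longrightarrow> peval v y \<Longrightarrow> False"
  shows False
proof -
  have "K4H (Neg c)"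
    by (rule K4H_prop2[OF assms(2,3)]) (use assms(4) in auto)
  then show False
    using assms(1) unfolding consistent_def by blast
qed

lemma consistentE3:
  assumes "consistent c" "K4H (Imp c x)" "K4H (Imp c y)" "K4H (Imp c z)"
    and "\<And>v. peval v x \<Longrightarrow> peval v y \<Longrightarrow> peval v z \<Longrightarrow> False"
  shows False
proof -
  have "K4H (Neg c)"
    by (rule K4H_prop3[OF assms(2,3,4)]) (use assms(5) in auto)
  then show False
    using assms(1) unfolding consistent_def by blast
qed

lemma consistent_extend_characteristic:
  "distinct L \<Longrightarrow> consistent c \<Longrightarrow> \<exists>G\<subseteq>set L. consistent (And c (characteristic L G))"
proof (induction L arbitrary: c)
  case Nil
  have "consistent (And c (characteristic [] {}))"
    using Nil(2) by (rule consistent_mono) (simp add: characteristic_def)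
  then show ?case by blast
next
  case (Cons x L)
  then have x: "x \<notin> set L" and L: "distinct L"
    by auto
  have lits: "map (literal G) L = map (literal (insert x G)) L" for G
    using x by (auto simp: literal_def)
  have "K4H (Neg (And c x)) \<Longrightarrow> K4H (Neg (And c (Neg x))) \<Longrightarrow> K4H (Neg c)"
    by (rule K4H_prop2[of "Neg (And c x)" "Neg (And c (Neg x))"]) auto
  then have "consistent (And c x) \<or> consistent (And c (Neg x))"
    using Cons.prems(2) unfolding consistent_def by blast
  then show ?case
  proof
    assume "consistent (And c x)"
    then obtain G where G: "G \<subseteq> set L" "consistent (And (And c x) (characteristic L G))"
      using Cons.IH L by blast
    have "consistent (And c (characteristic (x # L) (insert x G)))"
      by (rule consistent_mono[OF G(2)]) (auto simp: characteristic_def literal_def lits[symmetric])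
    moreover have "insert x G \<subseteq> set (x # L)"
      using G(1) by auto
    ultimately show ?thesis
      by blast
  next
    assume "consistent (And c (Neg x))"
    then obtain G where G: "G \<subseteq> set L" "consistent (And (And c (Neg x)) (characteristic L G))"
      using Cons.IH L by blast
    have "x \<notin> G"
      using x G(1) by blast
    then have "consistent (And c (characteristic (x # L) G))"
      by (intro consistent_mono[OF G(2)]) (auto simp: characteristic_def literal_def)
    then show ?thesis
      using G(1) by auto
  qed
qed

lemma consistent_And_imp:
  assumes "consistent c" "K4H (Imp c y)"
  shows "consistent (And c y)"
proof -
  have "K4H (Neg (And c y)) \<Longrightarrow> K4H (Neg c)"
    by (rule K4H_prop2[OF assms(2)]) auto
  then show ?thesis
    using assms(1) unfolding consistent_def by blast
qed

lemma consistent_characteristic_mem: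
  assumes "consistent (And c (characteristic S D))" "K4H (Imp c y)" "y \<in> set S"
  shows "y \<in> D"
proof (rule ccontr)
  assume "y \<notin> D"
  then have "K4H (Imp (characteristic S D) (Neg y))"
    using assms(3) by (rule characteristic_imp_not_mem[rotated])
  then have "K4H (Imp (And c (characteristic S D)) (Neg y))"
    by (rule K4H_prop1) auto
  moreover have "K4H (Imp (And c (characteristic S D)) y)"
    using assms(2) by (rule K4H_prop1) auto
  ultimately show False
    by (rule consistentE2[OF assms(1)]) auto
qed

lemma consistent_characteristic_not_mem:
  assumes "consistent (And c (characteristic S D))" "K4H (Imp c (Neg y))" "y \<in> set S"
  shows "y \<notin> D"
proof
  assume "y \<in> D"
  then have "K4H (Imp (characteristic S D) y)"
    using assms(3) by (rule characteristic_imp_mem[rotated])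
  then have "K4H (Imp (And c (characteristic S D)) y)"
    by (rule K4H_prop1) auto
  moreover have "K4H (Imp (And c (characteristic S D)) (Neg y))"
    using assms(2) by (rule K4H_prop1) auto
  ultimately show False
    by (rule consistentE2[OF assms(1)]) auto
qed

lemma K4H_Conj_Box:
  "K4H (Imp (Conj (map Box L)) (Box (Conj (map (\<lambda>t. And t (Box t)) L))))"
proof (induction L)
  case Nil
  show ?case
    by (simp, rule K4H_prop1[OF K4H.Nec_box[OF K4H_tautI]]) simp_all
next
  case (Cons t L)
  show ?case
    by (simp, rule K4H_prop4[OF Cons K4H.Four[of t] K4H_Box_And[of t "Box t"]
          K4H_Box_And[of "And t (Box t)" "Conj (map (\<lambda>t. And t (Box t)) L)"]]) auto
qed

text \<open>Transitivity (axiom 4) is why the successor also receives the boxed formulas \<open>Box t\<close>.\<close>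

lemma consistent_Box_successor:
  assumes "consistent (And c (Neg (Box a)))" "\<And>t. t \<in> set L \<Longrightarrow> K4H (Imp c (Box t))"
  shows "consistent (And (Conj (map (\<lambda>t. And t (Box t)) L)) (Neg a))"
  unfolding consistent_def
proof
  let ?M = "Conj (map (\<lambda>t. And t (Box t)) L)"
  assume "K4H (Neg (And ?M (Neg a)))"
  then have "K4H (Imp ?M a)"
    by (rule K4H_prop1) auto
  then have "K4H (Imp (Box ?M) (Box a))"
    by (rule K4H_Box_mono)
  moreover have "K4H (Imp c (Conj (map Box L)))"
    using assms(2) by (intro K4H_imp_Conj) auto
  ultimately have "K4H (Neg (And c (Neg (Box a))))"
    by (rule K4H_prop3[OF _ _ K4H_Conj_Box]) auto
  then show False
    using assms(1) unfolding consistent_def by blast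
qed

text \<open>\<open>Nxt\<close>-formulas are not decomposed: in normal form they are the atoms \<open>Nxt_pow k (Atom p)\<close>.\<close>

fun subfms :: "'p fm \<Rightarrow> 'p fm list" where
  "subfms (Atom p) = [Atom p]"
| "subfms (And a b) = And a b # subfms a @ subfms b"
| "subfms (Neg a) = Neg a # subfms a"
| "subfms (Box a) = Box a # subfms a"
| "subfms (Nxt a) = [Nxt a]"

lemma subfms_refl: "\<phi> \<in> set (subfms \<phi>)"
  by (cases \<phi>) auto

lemma subfms_trans: "\<psi> \<in> set (subfms \<phi>) \<Longrightarrow> set (subfms \<psi>) \<subseteq> set (subfms \<phi>)"
  by (induction \<phi>) auto

lemma subfms_closed:
  shows subfms_And: "And a b \<in> set (subfms \<phi>) \<Longrightarrow> a \<in> set (subfms \<phi>) \<and> b \<in> set (subfms \<phi>)"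
    and subfms_Neg: "Neg a \<in> set (subfms \<phi>) \<Longrightarrow> a \<in> set (subfms \<phi>)"
    and subfms_Box: "Box a \<in> set (subfms \<phi>) \<Longrightarrow> a \<in> set (subfms \<phi>)"
  using subfms_trans subfms_refl by fastforce+

lemma nxt_normal_subfms: "nxt_normal \<phi> \<Longrightarrow> \<psi> \<in> set (subfms \<phi>) \<Longrightarrow> nxt_normal \<psi>"
  by (induction \<phi>) auto

lemma size_subfms: "\<psi> \<in> set (subfms \<phi>) \<Longrightarrow> size \<psi> \<le> size \<phi>"
  by (induction \<phi>) auto

lemma size_Nxt_pow: "k < size (Nxt_pow k (Atom p))"
  by (induction k) auto

definition canon_worlds :: "'p fm list \<Rightarrow> 'p fm set set" where
  "canon_worlds S = {G. G \<subseteq> set S \<and> consistent (characteristic S G)}"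

definition canon_rel :: "'p fm set \<Rightarrow> 'p fm set \<Rightarrow> bool" where
  "canon_rel G D \<longleftrightarrow> (\<forall>t. Box t \<in> G \<longrightarrow> t \<in> D \<and> Box t \<in> D)"

lemma canon_And:
  assumes G: "G \<in> canon_worlds S" and m: "And a b \<in> set S" "a \<in> set S" "b \<in> set S"
  shows "And a b \<in> G \<longleftrightarrow> a \<in> G \<and> b \<in> G"
proof -
  have c: "consistent (characteristic S G)"
    using G by (simp add: canon_worlds_def)
  show ?thesis
  proof (cases "And a b \<in> G"; cases "a \<in> G"; cases "b \<in> G")
  qed (auto intro:
      consistentE2[OF c characteristic_imp_mem[OF m(1)] characteristic_imp_not_mem[OF m(2)]]
      consistentE2[OF c characteristic_imp_mem[OF m(1)] characteristic_imp_not_mem[OF m(3)]]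
      consistentE3[OF c characteristic_imp_not_mem[OF m(1)] characteristic_imp_mem[OF m(2)]
        characteristic_imp_mem[OF m(3)]])
qed

lemma canon_Neg:
  assumes G: "G \<in> canon_worlds S" and m: "Neg a \<in> set S" "a \<in> set S"
  shows "Neg a \<in> G \<longleftrightarrow> a \<notin> G"
proof -
  have c: "consistent (characteristic S G)"
    using G by (simp add: canon_worlds_def)
  show ?thesis
  proof (cases "Neg a \<in> G"; cases "a \<in> G")
  qed (auto intro:
      consistentE2[OF c characteristic_imp_mem[OF m(1)] characteristic_imp_mem[OF m(2)]]
      consistentE2[OF c characteristic_imp_not_mem[OF m(1)] characteristic_imp_not_mem[OF m(2)]])
qed

lemma canon_Box_witness:
  assumes G: "G \<in> canon_worlds S" and S: "distinct S" "\<And>t. Box t \<in> set S \<Longrightarrow> t \<in> set S"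
    and a: "Box a \<in> set S" "Box a \<notin> G"
  shows "\<exists>D\<in>canon_worlds S. canon_rel G D \<and> a \<notin> D"
proof -
  have "finite (Box -` G)"
    using G finite_subset[of G "set S"] by (intro finite_vimageI) (auto simp: canon_worlds_def inj_def)
  then obtain L where L: "set L = {t. Box t \<in> G}"
    using finite_list by (metis vimage_def)
  let ?c = "And (Conj (map (\<lambda>t. And t (Box t)) L)) (Neg a)"
  have G_S: "G \<subseteq> set S" and cG: "consistent (characteristic S G)"
    using G by (auto simp: canon_worlds_def)
  have "consistent (And (characteristic S G) (Neg (Box a)))"
    using cG characteristic_imp_not_mem[OF a] by (rule consistent_And_imp)
  then have "consistent ?c"
    using L G_S by (intro consistent_Box_successor) (auto intro: characteristic_imp_mem)
  then obtain D where D: "D \<subseteq> set S" "consistent (And ?c (characteristic S D))"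
    using consistent_extend_characteristic[OF S(1)] by blast
  have "D \<in> canon_worlds S"
    using D by (auto simp: canon_worlds_def intro: consistent_mono)
  moreover have "t \<in> D \<and> Box t \<in> D" if "Box t \<in> G" for t
  proof -
    have "K4H (Imp (Conj (map (\<lambda>t. And t (Box t)) L)) (And t (Box t)))"
      by (rule K4H_Conj_imp_mem) (use that L in auto)
    then have "K4H (Imp ?c (And t (Box t)))"
      by (rule K4H_prop1) auto
    then have "K4H (Imp ?c t)" "K4H (Imp ?c (Box t))"
      by (auto elim!: K4H_prop1)
    moreover have "t \<in> set S" "Box t \<in> set S"
      using that G_S S(2) by auto
    ultimately show ?thesis
      by (blast intro: consistent_characteristic_mem[OF D(2)])
  qed
  moreover have "a \<notin> D"
    using D(2) by (rule consistent_characteristic_not_mem) (auto intro: K4H_tautI S(2) a(1))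
  ultimately show ?thesis
    unfolding canon_rel_def by blast
qed

lemma canon_Box:
  assumes G: "G \<in> canon_worlds S" and S: "distinct S" "\<And>t. Box t \<in> set S \<Longrightarrow> t \<in> set S"
    and a: "Box a \<in> set S"
  shows "Box a \<in> G \<longleftrightarrow> (\<forall>D\<in>canon_worlds S. canon_rel G D \<longrightarrow> a \<in> D)"
  using canon_Box_witness[OF G S a] unfolding canon_rel_def by blast

section \<open>The layered finite countermodel\<close>

text \<open>An atom \<open>p\<close> holds at \<open>(G, k)\<close> iff \<open>Nxt_pow k (Atom p) \<in> G\<close>, so that at
  layer \<open>0\<close> the formula \<open>Nxt_pow k (Atom p)\<close> holds iff it belongs to \<open>G\<close>, provided \<open>k < N\<close>.\<close>

definition layer_worlds :: "'p fm list \<Rightarrow> nat \<Rightarrow> ('p fm set \<times> nat) set" where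
  "layer_worlds S N = canon_worlds S \<times> {..<N}"

definition layer_rel :: "'p fm list \<Rightarrow> nat \<Rightarrow> ('p fm set \<times> nat) \<Rightarrow> ('p fm set \<times> nat) \<Rightarrow> bool"
  where "layer_rel S N x y \<longleftrightarrow>
    x \<in> layer_worlds S N \<and> y \<in> layer_worlds S N \<and> snd y = snd x \<and> canon_rel (fst x) (fst y)"

definition layer_shift :: "nat \<Rightarrow> ('p fm set \<times> nat) \<Rightarrow> ('p fm set \<times> nat)" where
  "layer_shift N x = (fst x, if Suc (snd x) < N then Suc (snd x) else 0)"

definition layer_val :: "'p \<Rightarrow> ('p fm set \<times> nat) set" where
  "layer_val p = {x. Nxt_pow (snd x) (Atom p) \<in> fst x}"

lemma ksat_Nxt_pow: "ksat W R f V w (Nxt_pow k a) = ksat W R f V ((f ^^ k) w) a"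
  by (induction k arbitrary: w) (auto simp: funpow_Suc_right simp del: funpow.simps)

lemma layer_shift_pow: "k < N \<Longrightarrow> (layer_shift N ^^ k) (G, 0) = (G, k)"
  by (induction k) (auto simp: layer_shift_def)

lemma finite_layer_worlds: "finite (layer_worlds S N)"
proof -
  have "canon_worlds S \<subseteq> Pow (set S)"
    by (auto simp: canon_worlds_def)
  then show ?thesis
    unfolding layer_worlds_def by (auto intro: finite_subset)
qed

lemma inv_dyn_K4_frame_layers:
  assumes "canon_worlds S \<noteq> {}" "0 < N"
  shows "inv_dyn_K4_frame (layer_worlds S N) (layer_rel S N) (layer_shift N)"
  unfolding inv_dyn_K4_frame_def
proof (intro conjI)
  show "layer_worlds S N \<noteq> {}"
    using assms by (auto simp: layer_worlds_def)
  show "bij_betw (layer_shift N) (layer_worlds S N) (layer_worlds S N)"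
  proof (rule bij_betw_byWitness[where f'="\<lambda>x. (fst x, if snd x = 0 then N - 1 else snd x - 1)"])
  qed (use assms(2) in \<open>auto simp: layer_worlds_def layer_shift_def\<close>)
qed (use assms(2) in \<open>auto simp: layer_rel_def canon_rel_def layer_worlds_def layer_shift_def\<close>)

lemma layer_truth:
  assumes normal: "nxt_normal \<phi>" and S: "S = remdups (subfms \<phi>)" and N: "N = Suc (size \<phi>)"
    and "\<psi> \<in> set (subfms \<phi>)" "G \<in> canon_worlds S"
  shows "ksat (layer_worlds S N) (layer_rel S N) (layer_shift N) layer_val (G, 0) \<psi> \<longleftrightarrow> \<psi> \<in> G"
  using assms(4,5)
proof (induction \<psi> arbitrary: G)
  case (Atom p)
  then show ?case by (simp add: layer_val_def)
next
  case (And a b)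
  then show ?case
    using canon_And[OF And.prems(2)] subfms_And[OF And.prems(1)] S by simp
next
  case (Neg a)
  then show ?case
    using canon_Neg[OF Neg.prems(2)] subfms_Neg[OF Neg.prems(1)] S by simp
next
  case (Box a)
  let ?M = "ksat (layer_worlds S N) (layer_rel S N) (layer_shift N) layer_val"
  have "?M (G, 0) (Box a) \<longleftrightarrow> (\<forall>D\<in>canon_worlds S. canon_rel G D \<longrightarrow> ?M (D, 0) a)"
    using Box.prems(2) N by (auto simp: layer_rel_def layer_worlds_def)
  also have "\<dots> \<longleftrightarrow> (\<forall>D\<in>canon_worlds S. canon_rel G D \<longrightarrow> a \<in> D)"
    using Box.IH subfms_Box[OF Box.prems(1)] by auto
  also have "\<dots> \<longleftrightarrow> Box a \<in> G"
    using canon_Box[OF Box.prems(2)] Box.prems(1) subfms_Box S by auto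
  finally show ?case .
next
  case (Nxt a)
  obtain k p where "a = Nxt_pow k (Atom p)"
    using nxt_normal_subfms[OF normal Nxt.prems(1)] by auto
  then have a: "Nxt a = Nxt_pow (Suc k) (Atom p)"
    by simp
  have "Suc k < N"
    using size_Nxt_pow[of "Suc k" p] size_subfms[OF Nxt.prems(1)] a N by simp
  then show ?case
    by (simp only: a ksat_Nxt_pow layer_shift_pow) (simp add: layer_val_def)
qed

theorem finite_countermodel:
  fixes \<phi> :: "'p fm"
  assumes "\<not> K4H \<phi>"
  obtains W :: "('p fm set \<times> nat) set" and R f
  where "finite W" "inv_dyn_K4_frame W R f" "\<not> kvalid W R f \<phi>"
proof -
  define \<phi>' where "\<phi>' = nxt_nf \<phi> 0"
  define S where "S = remdups (subfms \<phi>')"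
  define N where "N = Suc (size \<phi>')"
  have equiv: "K4H (Iff \<phi> \<phi>')"
    using K4H_Nxt_pow_nxt_nf[of 0 \<phi>] by (simp add: \<phi>'_def)
  have "K4H (Neg (Neg \<phi>')) \<Longrightarrow> K4H \<phi>"
    by (erule K4H_prop2[OF equiv]) auto
  then have "consistent (Neg \<phi>')"
    using assms unfolding consistent_def by blast
  then obtain G where G: "G \<subseteq> set S" "consistent (And (Neg \<phi>') (characteristic S G))"
    using consistent_extend_characteristic[of S] by (auto simp: S_def)
  have G_world: "G \<in> canon_worlds S"
    using G by (auto simp: canon_worlds_def intro: consistent_mono)
  have "\<phi>' \<notin> G"
    using G(2) by (rule consistent_characteristic_not_mem) (auto intro: K4H_tautI simp: S_def subfms_refl)
  then have refuted: "\<not> ksat (layer_worlds S N) (layer_rel S N) (layer_shift N) layer_val (G, 0) \<phi>'"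
    using layer_truth[OF nxt_normal_nxt_nf[of \<phi> 0, folded \<phi>'_def] S_def N_def subfms_refl G_world]
    by simp
  have frame: "inv_dyn_K4_frame (layer_worlds S N) (layer_rel S N) (layer_shift N)"
    using G_world by (intro inv_dyn_K4_frame_layers) (auto simp: N_def)
  have "(G, 0) \<in> layer_worlds S N"
    using G_world by (simp add: layer_worlds_def N_def)
  then have "\<not> kvalid (layer_worlds S N) (layer_rel S N) (layer_shift N) \<phi>"
    using K4H_sound_kripke[OF frame equiv] refuted unfolding kvalid_def by fastforce
  then show ?thesis
    using that finite_layer_worlds frame by blast
qed

locale dyn_bounded_morphism =
  fixes W' :: "'b set" and R' f' and W :: "'a set" and R f and \<pi> :: "'b \<Rightarrow> 'a"
  assumes into: "x \<in> W' \<Longrightarrow> \<pi> x \<in> W"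
    and rel_forth: "x \<in> W' \<Longrightarrow> y \<in> W' \<Longrightarrow> R' x y \<Longrightarrow> R (\<pi> x) (\<pi> y)"
    and rel_back: "x \<in> W' \<Longrightarrow> v \<in> W \<Longrightarrow> R (\<pi> x) v \<Longrightarrow> \<exists>y\<in>W'. R' x y \<and> \<pi> y = v"
    and map_in: "x \<in> W' \<Longrightarrow> f' x \<in> W'"
    and map_commute: "x \<in> W' \<Longrightarrow> \<pi> (f' x) = f (\<pi> x)"
begin

lemma ksat_iff: "x \<in> W' \<Longrightarrow> ksat W' R' f' (\<lambda>p. \<pi> -` V p) x \<phi> \<longleftrightarrow> ksat W R f V (\<pi> x) \<phi>"
proof (induction \<phi> arbitrary: x)
  case (Box a)
  show ?case
  proof
    assume "ksat W' R' f' (\<lambda>p. \<pi> -` V p) x (Box a)"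
    then show "ksat W R f V (\<pi> x) (Box a)"
      using Box rel_back by fastforce
  next
    assume "ksat W R f V (\<pi> x) (Box a)"
    then show "ksat W' R' f' (\<lambda>p. \<pi> -` V p) x (Box a)"
      using Box rel_forth into by auto
  qed
qed (simp_all add: map_in map_commute)

lemma kvalid_reflect:
  assumes "W \<subseteq> \<pi> ` W'" "kvalid W' R' f' \<phi>"
  shows "kvalid W R f \<phi>"
  unfolding kvalid_def
proof (intro allI ballI)
  fix V w
  assume "w \<in> W"
  then obtain x where "x \<in> W'" "w = \<pi> x"
    using assms(1) by blast
  then show "ksat W R f V w \<phi>"
    using assms(2) ksat_iff unfolding kvalid_def by blast
qed

end

lemma inj_on_into_infinite:
  assumes "countable (A :: 'b set)" "infinite (UNIV :: 'a set)"
  obtains e :: "'b \<Rightarrow> 'a" where "inj_on e A"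
proof -
  obtain g :: "'b \<Rightarrow> nat" where "inj_on g A"
    using countableE[OF assms(1)] by blast
  moreover obtain h :: "nat \<Rightarrow> 'a" where "inj h"
    using infinite_countable_subset[OF assms(2)] by blast
  ultimately have "inj_on (h \<circ> g) A"
    by (auto intro: comp_inj_on inj_on_subset)
  then show ?thesis
    using that by blast
qed

lemma embed_frame:
  fixes W :: "'b set" and e :: "'b \<Rightarrow> 'a"
  assumes frame: "inv_dyn_K4_frame W R f" and e: "inj_on e W"
  obtains R' f' where "inv_dyn_K4_frame (e ` W) R' f'" "irreflp R \<Longrightarrow> irreflp R'"
    "\<And>\<phi>. kvalid (e ` W) R' f' \<phi> \<Longrightarrow> kvalid W R f \<phi>"
proof
  let ?\<pi> = "the_inv_into W e"
  let ?R' = "\<lambda>x y. x \<in> e ` W \<and> y \<in> e ` W \<and> R (?\<pi> x) (?\<pi> y)"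
  let ?f' = "e \<circ> f \<circ> ?\<pi>"
  have \<pi>_e [simp]: "?\<pi> (e w) = w" if "w \<in> W" for w
    using the_inv_into_f_f[OF e that] .
  have f_W: "f w \<in> W" if "w \<in> W" for w
    using frame_map_in[OF frame that] .
  show "inv_dyn_K4_frame (e ` W) ?R' ?f'"
    unfolding inv_dyn_K4_frame_def
  proof (intro conjI)
    show "e ` W \<noteq> {}"
      using frame_nonempty[OF frame] by simp
    show "bij_betw ?f' (e ` W) (e ` W)"
      unfolding comp_assoc
      by (rule bij_betw_trans[OF bij_betw_trans[OF bij_betw_the_inv_into[OF inj_on_imp_bij_betw[OF e]]
            frame_bij[OF frame]] inj_on_imp_bij_betw[OF e]])
    show "\<forall>x y. ?R' x y \<longrightarrow> x \<in> e ` W \<and> y \<in> e ` W"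
      by blast
    show "\<forall>x\<in>e ` W. \<forall>y\<in>e ` W. \<forall>z\<in>e ` W. ?R' x y \<longrightarrow> ?R' y z \<longrightarrow> ?R' x z"
      using frame_trans[OF frame] by blast
    show "\<forall>x\<in>e ` W. \<forall>y\<in>e ` W. ?R' x y \<longleftrightarrow> ?R' (?f' x) (?f' y)"
    proof (intro ballI)
      fix x y assume "x \<in> e ` W" "y \<in> e ` W"
      then obtain a b where "a \<in> W" "b \<in> W" "x = e a" "y = e b"
        by blast
      then show "?R' x y \<longleftrightarrow> ?R' (?f' x) (?f' y)"
        using f_W frame_rel_map_iff[OF frame] by simp
    qed
  qed
  show "irreflp ?R'" if "irreflp R"
    using that by (simp add: irreflp_def)
  show "kvalid W R f \<phi>" if "kvalid (e ` W) ?R' ?f' \<phi>" for \<phi>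
  proof (rule dyn_bounded_morphism.kvalid_reflect[OF _ _ that])
    show "dyn_bounded_morphism (e ` W) ?R' ?f' W R f ?\<pi>"
      by unfold_locales (use frame_rel_in[OF frame] f_W in auto)
    show "W \<subseteq> ?\<pi> ` e ` W"
    proof
      fix w assume "w \<in> W"
      then show "w \<in> ?\<pi> ` e ` W"
        by (metis \<pi>_e imageI)
    qed
  qed
qed

section \<open>Unravelling clusters\<close>

text \<open>Worlds \<open>(w, i)\<close> for \<open>i \<in> \<nat>\<close>; inside a cluster of mutually related worlds the copies
  are ordered by their index, which makes the relation irreflexive but keeps it transitive.\<close>

definition unravel :: "('a \<Rightarrow> 'a \<Rightarrow> bool) \<Rightarrow> 'a \<times> nat \<Rightarrow> 'a \<times> nat \<Rightarrow> bool" where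
  "unravel R x y \<longleftrightarrow> R (fst x) (fst y) \<and> (R (fst y) (fst x) \<longrightarrow> snd x < snd y)"

lemma irreflp_unravel: "irreflp (unravel R)"
  by (simp add: irreflp_def unravel_def)

lemma inv_dyn_K4_frame_unravel:
  assumes frame: "inv_dyn_K4_frame W R f"
  shows "inv_dyn_K4_frame (W \<times> (UNIV :: nat set)) (unravel R) (map_prod f id)"
  unfolding inv_dyn_K4_frame_def
proof (intro conjI)
  show "W \<times> (UNIV :: nat set) \<noteq> {}"
    using frame_nonempty[OF frame] by simp
  show "bij_betw (map_prod f id) (W \<times> (UNIV :: nat set)) (W \<times> (UNIV :: nat set))"
    using bij_betw_map_prod[OF frame_bij[OF frame] bij_betw_id[of UNIV]] by simp
  show "\<forall>u\<in>W \<times> (UNIV :: nat set). \<forall>v\<in>W \<times> (UNIV :: nat set). \<forall>w\<in>W \<times> (UNIV :: nat set).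
          unravel R u v \<longrightarrow> unravel R v w \<longrightarrow> unravel R u w"
    unfolding unravel_def using frame_trans[OF frame] by (meson order.strict_trans)
qed (use frame_rel_in[OF frame] frame_rel_map_iff[OF frame] in \<open>auto simp: unravel_def\<close>)

lemma kvalid_unravel_reflect:
  assumes frame: "inv_dyn_K4_frame W R f"
    and "kvalid (W \<times> (UNIV :: nat set)) (unravel R) (map_prod f id) \<phi>"
  shows "kvalid W R f \<phi>"
proof (rule dyn_bounded_morphism.kvalid_reflect[OF _ _ assms(2)])
  show "dyn_bounded_morphism (W \<times> (UNIV :: nat set)) (unravel R) (map_prod f id) W R f fst"
  proof
    fix x v assume "x \<in> W \<times> (UNIV :: nat set)" "v \<in> W" "R (fst x) v"
    then show "\<exists>y\<in>W \<times> (UNIV :: nat set). unravel R x y \<and> fst y = v"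
      by (intro bexI[of _ "(v, Suc (snd x))"]) (auto simp: unravel_def)
  qed (auto simp: unravel_def frame_map_in[OF frame])
qed force

section \<open>The Alexandrov topology of an irreflexive frame\<close>

definition alexandrov_topology :: "'a set \<Rightarrow> ('a \<Rightarrow> 'a \<Rightarrow> bool) \<Rightarrow> 'a topology" where
  "alexandrov_topology X R = topology (\<lambda>U. U \<subseteq> X \<and> (\<forall>x\<in>U. \<forall>y. R x y \<longrightarrow> y \<in> U))"

lemma openin_alexandrov_topology:
  "openin (alexandrov_topology X R) U \<longleftrightarrow> U \<subseteq> X \<and> (\<forall>x\<in>U. \<forall>y. R x y \<longrightarrow> y \<in> U)"
proof -
  have "istopology (\<lambda>U. U \<subseteq> X \<and> (\<forall>x\<in>U. \<forall>y. R x y \<longrightarrow> y \<in> U))"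
    unfolding istopology_def by blast
  then show ?thesis
    unfolding alexandrov_topology_def by simp
qed

locale irreflexive_frame =
  fixes W :: "'a set" and R f
  assumes frame: "inv_dyn_K4_frame W R f" and irrefl: "irreflp R"
begin

abbreviation (input) T :: "'a topology" where
  "T \<equiv> alexandrov_topology W R"

lemma topspace_alexandrov: "topspace T = W"
proof
  show "topspace T \<subseteq> W"
    unfolding topspace_def openin_alexandrov_topology by auto
  have "openin T W"
    unfolding openin_alexandrov_topology using frame_rel_in[OF frame] by blast
  then show "W \<subseteq> topspace T"
    by (rule openin_subset)
qed

lemma openin_up_set: "x \<in> W \<Longrightarrow> openin T (insert x {y. R x y})"
  unfolding openin_alexandrov_topology using frame_rel_in[OF frame] frame_trans[OF frame] by blast

lemma in_derived_set_of_alexandrov: "x \<in> T derived_set_of A \<longleftrightarrow> x \<in> W \<and> (\<exists>y\<in>A. R x y)"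
proof
  assume x: "x \<in> T derived_set_of A"
  then have "x \<in> W"
    using derived_set_of_subset_topspace[of T A] topspace_alexandrov by blast
  then have "\<exists>y. y \<noteq> x \<and> y \<in> A \<and> y \<in> insert x {y. R x y}"
    using x openin_up_set unfolding in_derived_set_of by blast
  then show "x \<in> W \<and> (\<exists>y\<in>A. R x y)"
    using \<open>x \<in> W\<close> by blast
next
  assume "x \<in> W \<and> (\<exists>y\<in>A. R x y)"
  moreover have "y \<noteq> x" if "R x y" for y
    using that irrefl by (auto simp: irreflp_def)
  ultimately show "x \<in> T derived_set_of A"
    unfolding in_derived_set_of topspace_alexandrov openin_alexandrov_topology by blast
qed

text \<open>The up-set of \<open>x\<close> meets the closed set of points below or equal to \<open>x\<close> only in \<open>x\<close>,
  by irreflexivity.\<close>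

lemma T_D_space_alexandrov: "T_D_space T"
  unfolding T_D_space_def topspace_alexandrov
proof
  fix x assume x: "x \<in> W"
  define C where "C = {z \<in> W. z = x \<or> R z x}"
  have "openin T (W - C)"
    unfolding openin_alexandrov_topology C_def
    using frame_rel_in[OF frame] frame_trans[OF frame] by blast
  then have "closedin T C"
    unfolding closedin_def topspace_alexandrov C_def by auto
  moreover have "insert x {y. R x y} \<inter> C = {x}"
    using x irrefl frame_trans[OF frame] unfolding C_def irreflp_def by blast
  ultimately show "\<exists>U C. openin T U \<and> closedin T C \<and> U \<inter> C = {x}"
    using openin_up_set[OF x] by blast
qed

lemma homeomorphic_map_alexandrov: "homeomorphic_map T T f"
proof (rule bijective_open_imp_homeomorphic_map)
  have f_W: "f ` W = W" and inj: "inj_on f W"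
    using frame_bij[OF frame] by (auto simp: bij_betw_def)
  show "f ` topspace T = topspace T" "inj_on f (topspace T)"
    using f_W inj by (simp_all add: topspace_alexandrov)
  show "continuous_map T T f"
    unfolding continuous_map_openin_preimage_eq topspace_alexandrov openin_alexandrov_topology
    using frame_rel_in[OF frame] frame_rel_map_iff[OF frame] f_W by auto
  show "open_map T T f"
    unfolding open_map_def openin_alexandrov_topology
  proof (intro allI impI conjI ballI)
    fix U z y assume U: "U \<subseteq> W \<and> (\<forall>x\<in>U. \<forall>y. R x y \<longrightarrow> y \<in> U)" and "z \<in> f ` U" "R z y"
    then obtain x u where "x \<in> U" "z = f x" "u \<in> W" "y = f u"
      using frame_rel_in[OF frame] f_W by (metis imageE)
    then show "y \<in> f ` U"
      using U \<open>R z y\<close> frame_rel_map_iff[OF frame] by blast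
  qed (use f_W in blast)
qed

lemma dval_alexandrov: "dval T f V \<phi> = {w \<in> W. ksat W R f V w \<phi>}"
proof (induction \<phi>)
  case (Box a)
  have "w \<in> dval T f V (Box a) \<longleftrightarrow> w \<in> W \<and> ksat W R f V w (Box a)" for w
  proof -
    have "w \<in> dval T f V (Box a) \<longleftrightarrow> w \<in> W \<and> \<not> (\<exists>y\<in>W - dval T f V a. R w y)"
      by (simp add: dval.simps(4) in_derived_set_of_alexandrov topspace_alexandrov) blast
    also have "\<dots> \<longleftrightarrow> w \<in> W \<and> (\<forall>v\<in>W. R w v \<longrightarrow> ksat W R f V v a)"
      using Box by auto
    finally show ?thesis
      by simp
  qed
  then show ?case
    by blast
qed (auto simp: topspace_alexandrov frame_map_in[OF frame])

lemma dvalid_alexandrov_iff: "dvalid T f \<phi> \<longleftrightarrow> kvalid W R f \<phi>"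
  unfolding dvalid_def kvalid_def dval_alexandrov topspace_alexandrov by blast

end

theorem K4H_complete_finite_frames:
  fixes \<phi> :: "'p fm"
  assumes "infinite (UNIV :: 'a set)"
    and valid: "\<forall>(W :: 'a set) R f. finite W \<and> inv_dyn_K4_frame W R f \<longrightarrow> kvalid W R f \<phi>"
  shows "K4H \<phi>"
proof (rule ccontr)
  assume "\<not> K4H \<phi>"
  then obtain W :: "('p fm set \<times> nat) set" and R f
    where W: "finite W" "inv_dyn_K4_frame W R f" "\<not> kvalid W R f \<phi>"
    by (rule finite_countermodel)
  obtain e :: "'p fm set \<times> nat \<Rightarrow> 'a" where "inj_on e W"
    using inj_on_into_infinite[OF countable_finite[OF W(1)] assms(1)] .
  then obtain R' f' where "inv_dyn_K4_frame (e ` W) R' f'" "kvalid (e ` W) R' f' \<phi> \<Longrightarrow> kvalid W R f \<phi>"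
    using embed_frame[OF W(2)] by metis
  then show False
    using valid W(1,3) by blast
qed

theorem kvalid_finite_frames_if_dvalid:
  assumes "infinite (UNIV :: 'a set)"
    and valid: "\<forall>(T :: 'a topology) f. inv_DTS T f \<and> T_D_space T \<longrightarrow> dvalid T f \<phi>"
    and "finite W" "inv_dyn_K4_frame (W :: 'a set) R f"
  shows "kvalid W R f \<phi>"
proof -
  let ?U = "W \<times> (UNIV :: nat set)"
  have "countable ?U"
    using assms(3) by (simp add: countable_finite)
  then obtain e :: "'a \<times> nat \<Rightarrow> 'a" where "inj_on e ?U"
    using assms(1) by (rule inj_on_into_infinite)
  then obtain R' f' where R': "inv_dyn_K4_frame (e ` ?U) R' f'" "irreflp R'"
    and reflect: "kvalid (e ` ?U) R' f' \<phi> \<Longrightarrow> kvalid ?U (unravel R) (map_prod f id) \<phi>"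
    using embed_frame[OF inv_dyn_K4_frame_unravel[OF assms(4)]] irreflp_unravel by metis
  interpret irreflexive_frame "e ` ?U" R' f'
    using R' by unfold_locales
  have "kvalid (e ` ?U) R' f' \<phi>"
    using valid T_D_space_alexandrov homeomorphic_map_alexandrov dvalid_alexandrov_iff
    unfolding inv_DTS_def by blast
  then show ?thesis
    using kvalid_unravel_reflect[OF assms(4)] reflect by blast
qed

theorem mainTheorem9:
  fixes \<phi> :: "'p fm"
  assumes "infinite (UNIV :: 'a set)"
  shows "(K4H \<phi> \<longleftrightarrow>
           (\<forall>(W :: 'a set) R f. finite W \<and> inv_dyn_K4_frame W R f \<longrightarrow> kvalid W R f \<phi>))
       \<and> ((\<forall>(W :: 'a set) R f. finite W \<and> inv_dyn_K4_frame W R f \<longrightarrow> kvalid W R f \<phi>) \<longleftrightarrow>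
           (\<forall>(T :: 'a topology) f. inv_DTS T f \<and> T_D_space T \<longrightarrow> dvalid T f \<phi>))"
proof -
  have "K4H \<phi> \<Longrightarrow> \<forall>(W :: 'a set) R f. finite W \<and> inv_dyn_K4_frame W R f \<longrightarrow> kvalid W R f \<phi>"
    using K4H_sound_kripke by blast
  moreover have "K4H \<phi> \<Longrightarrow> \<forall>(T :: 'a topology) f. inv_DTS T f \<and> T_D_space T \<longrightarrow> dvalid T f \<phi>"
    using K4H_sound_d by blast
  moreover have "\<forall>(T :: 'a topology) f. inv_DTS T f \<and> T_D_space T \<longrightarrow> dvalid T f \<phi> \<Longrightarrow>
      \<forall>(W :: 'a set) R f. finite W \<and> inv_dyn_K4_frame W R f \<longrightarrow> kvalid W R f \<phi>"
    using kvalid_finite_frames_if_dvalid[OF assms] by blast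
  moreover have "\<forall>(W :: 'a set) R f. finite W \<and> inv_dyn_K4_frame W R f \<longrightarrow> kvalid W R f \<phi> \<Longrightarrow> K4H \<phi>"
    by (rule K4H_complete_finite_frames[OF assms])
  ultimately show ?thesis
    by argo
qed

end
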